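(* Let $P\in\Delta_{\mathcal{T},\mathcal{X},\mathcal{Y}}$. If the set of minimizers of $Q\mapsto I_Q(T:X\mid Y)$ over $\Delta_P$ contains more than one element, then there exists a minimizer lying on the relative boundary of $\Delta_P$.
   Context: $T,X,Y$ are random variables with finite state spaces $\mathcal{T},\mathcal{X},\mathcal{Y}$; $\Delta_{\mathcal{T},\mathcal{X},\mathcal{Y}}$ is the set of all joint distributions on $\mathcal{T}\times\mathcal{X}\times\mathcal{Y}$. For $P\in\Delta_{\mathcal{T},\mathcal{X},\mathcal{Y}}$, $\Delta_P=\{Q\in\Delta_{\mathcal{T},\mathcal{X},\mathcal{Y}}: Q(X=x,T=t)=P(X=x,T=t),\ Q(Y=y,T=t)=P(Y=y,T=t)\ \forall x,y,t\}$, a polytope. $I_Q(T:X\mid Y)$ is the conditional mutual information computed under $Q$. On $\Delta_P$, minimizing $I_Q(T:X\mid Y)$ is equivalent to maximizing the conditional entropy $H_Q(T\mid X,Y)$. *)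

theory Defs
  imports "HOL-Analysis.Analysis"
begin

text \<open>Joint distributions of (T,X,Y) on finite state spaces 't, 'x, 'y, represented as
  vectors in the Euclidean space real ^ ('t \<times> 'x \<times> 'y), so that affine notions
  (relative interior / relative boundary) are available from HOL-Analysis.\<close>

definition joint_dists :: "(real ^ ('t::finite \<times> 'x::finite \<times> 'y::finite)) set" where
  "joint_dists = {Q. (\<forall>i. 0 \<le> Q $ i) \<and> (\<Sum>i\<in>UNIV. Q $ i) = 1}"

definition marg_TX :: "real ^ ('t::finite \<times> 'x::finite \<times> 'y::finite) \<Rightarrow> 't \<Rightarrow> 'x \<Rightarrow> real" where
  "marg_TX Q t x = (\<Sum>y\<in>UNIV. Q $ (t, x, y))"

definition marg_TY :: "real ^ ('t::finite \<times> 'x::finite \<times> 'y::finite) \<Rightarrow> 't \<Rightarrow> 'y \<Rightarrow> real" where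
  "marg_TY Q t y = (\<Sum>x\<in>UNIV. Q $ (t, x, y))"

definition marg_XY :: "real ^ ('t::finite \<times> 'x::finite \<times> 'y::finite) \<Rightarrow> 'x \<Rightarrow> 'y \<Rightarrow> real" where
  "marg_XY Q x y = (\<Sum>t\<in>UNIV. Q $ (t, x, y))"

definition marg_Y :: "real ^ ('t::finite \<times> 'x::finite \<times> 'y::finite) \<Rightarrow> 'y \<Rightarrow> real" where
  "marg_Y Q y = (\<Sum>t\<in>UNIV. \<Sum>x\<in>UNIV. Q $ (t, x, y))"

definition Delta_P :: "real ^ ('t::finite \<times> 'x::finite \<times> 'y::finite) \<Rightarrow> (real ^ ('t \<times> 'x \<times> 'y)) set" where
  "Delta_P P = {Q \<in> joint_dists. (\<forall>t x. marg_TX Q t x = marg_TX P t x) \<and>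
                                  (\<forall>t y. marg_TY Q t y = marg_TY P t y)}"

definition cond_mutual_info :: "real ^ ('t::finite \<times> 'x::finite \<times> 'y::finite) \<Rightarrow> real" where
  "cond_mutual_info Q = (\<Sum>(t, x, y)\<in>UNIV.
     if 0 < Q $ (t, x, y)
     then Q $ (t, x, y) * ln ((Q $ (t, x, y) * marg_Y Q y) / (marg_XY Q x y * marg_TY Q t y))
     else 0)"

definition CMI_minimizers :: "real ^ ('t::finite \<times> 'x::finite \<times> 'y::finite) \<Rightarrow> (real ^ ('t \<times> 'x \<times> 'y)) set" where
  "CMI_minimizers P = {Q \<in> Delta_P P. \<forall>Q'\<in>Delta_P P. cond_mutual_info Q \<le> cond_mutual_info Q'}"

end

theory Submission
  imports Defs
begin

text \<open>On \<open>\<Delta>\<^sub>P\<close> the \<open>(T,Y)\<close>-marginal is fixed, so \<open>I(T:X|Y) = H(T|Y) - H(T|X,Y)\<close> is a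
  constant plus \<open>-H(T|X,Y)\<close>. The latter is a sum over the fibres \<open>(x,y)\<close> of the function
  \<open>v \<mapsto> \<Sum>\<^sub>t v\<^sub>t ln (v\<^sub>t / \<Sum> v)\<close>, which is convex and positively homogeneous; by the equality
  case of Gibbs' inequality it is affine on a segment only if the fibres of the endpoints are
  proportional, and then it is affine on the whole line through them. So if two distinct
  distributions minimize, the objective is constant on the line through them, and the point where
  this line leaves the polytope \<open>\<Delta>\<^sub>P\<close> is a minimizer with a vanishing coordinate, hence on the
  relative boundary.\<close>

text \<open>For nonnegative weights \<open>v\<close> this is \<open>-(\<Sum> v) \<cdot> H(v / \<Sum> v)\<close>.\<close>
definition neg_entropy :: "('t::finite \<Rightarrow> real) \<Rightarrow> real" where
  "neg_entropy v = (\<Sum>t\<in>UNIV. v t * ln (v t / sum v UNIV))"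

lemma neg_entropy_scale: "neg_entropy (\<lambda>t. c * v t) = c * neg_entropy v"
proof (cases "c = 0")
  case False
  have "sum (\<lambda>t. c * v t) UNIV = c * sum v UNIV" by (simp add: sum_distrib_left)
  then have "neg_entropy (\<lambda>t. c * v t) = (\<Sum>t\<in>UNIV. c * (v t * ln (v t / sum v UNIV)))"
    unfolding neg_entropy_def using False by (intro sum.cong) auto
  then show ?thesis by (simp add: neg_entropy_def sum_distrib_left)
qed (simp add: neg_entropy_def)

lemma mult_ln_div_ge:
  fixes a b :: real
  assumes "0 \<le> a" "0 \<le> b" "b = 0 \<Longrightarrow> a = 0"
  shows "a - b \<le> a * ln (a / b)"
    and "a * ln (a / b) = a - b \<Longrightarrow> a = b"
proof -
  consider "a = 0" | "0 < a" "0 < b" using assms by linarith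
  then have "a - b \<le> a * ln (a / b) \<and> (a * ln (a / b) = a - b \<longrightarrow> a = b)"
  proof cases
    case 2
    have "a * ln (a / b) = - a * ln (b / a)" using 2 by (simp add: ln_div algebra_simps)
    moreover have "ln (b / a) \<le> b / a - 1" using 2 by (intro ln_le_minus_one) simp
    moreover have "ln (b / a) = b / a - 1 \<Longrightarrow> b / a = 1" using 2 by (intro ln_eq_minus_one) simp
    ultimately show ?thesis using 2 by (auto simp: field_simps mult_left_mono)
  qed (use assms in auto)
  then show "a - b \<le> a * ln (a / b)" "a * ln (a / b) = a - b \<Longrightarrow> a = b" by blast+
qed

lemma sum_mult_ln_div_ge:
  fixes p q :: "'a \<Rightarrow> real"
  assumes "finite A" and "\<And>t. 0 \<le> p t" "\<And>t. 0 \<le> q t" "\<And>t. q t = 0 \<Longrightarrow> p t = 0"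
  shows "sum p A - sum q A \<le> (\<Sum>t\<in>A. p t * ln (p t / q t))"
    and "(\<Sum>t\<in>A. p t * ln (p t / q t)) = sum p A - sum q A \<Longrightarrow> \<forall>t\<in>A. p t = q t"
proof -
  define gap where "gap t = p t * ln (p t / q t) - (p t - q t)" for t
  have gap_nonneg: "0 \<le> gap t" for t
    using mult_ln_div_ge(1)[of "p t" "q t"] assms(2-4) by (simp add: gap_def)
  have sum_gap: "sum gap A = (\<Sum>t\<in>A. p t * ln (p t / q t)) - (sum p A - sum q A)"
    by (simp add: gap_def sum_subtractf)
  show "sum p A - sum q A \<le> (\<Sum>t\<in>A. p t * ln (p t / q t))"
    using sum_nonneg[of A gap] gap_nonneg sum_gap by simp
  assume "(\<Sum>t\<in>A. p t * ln (p t / q t)) = sum p A - sum q A"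
  then have "\<forall>t\<in>A. gap t = 0"
    using sum_gap sum_nonneg_eq_0_iff[OF assms(1), of gap] gap_nonneg by simp
  then show "\<forall>t\<in>A. p t = q t"
    using mult_ln_div_ge(2) assms(2-4) by (auto simp: gap_def)
qed

lemma gibbs_inequality:
  fixes u m :: "'t::finite \<Rightarrow> real"
  assumes u_nonneg: "\<And>t. 0 \<le> u t" and m_nonneg: "\<And>t. 0 \<le> m t"
    and support: "\<And>t. m t = 0 \<Longrightarrow> u t = 0"
  shows "(\<Sum>t\<in>UNIV. u t * ln (m t / sum m UNIV)) \<le> neg_entropy u"
    and "neg_entropy u = (\<Sum>t\<in>UNIV. u t * ln (m t / sum m UNIV)) \<Longrightarrow> \<exists>c. \<forall>t. u t = c * m t"
proof -
  define U where "U = sum u UNIV"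
  define M where "M = sum m UNIV"
  have "(\<Sum>t\<in>UNIV. u t * ln (m t / sum m UNIV)) \<le> neg_entropy u \<and>
    (neg_entropy u = (\<Sum>t\<in>UNIV. u t * ln (m t / sum m UNIV)) \<longrightarrow> (\<exists>c. \<forall>t. u t = c * m t))"
  proof (cases "U = 0")
    case True
    then have "u t = 0" for t using u_nonneg sum_nonneg_eq_0_iff[of UNIV u] by (simp add: U_def)
    then show ?thesis by (simp add: neg_entropy_def)
  next
    case False
    then have "0 < U" using u_nonneg by (simp add: U_def sum_nonneg less_le)
    obtain t0 where "u t0 \<noteq> 0" using False U_def by (metis sum.neutral)
    then have "0 < m t0" using support m_nonneg less_le by metis
    then have "0 < M" unfolding M_def
      by (metis m_nonneg member_le_sum finite UNIV_I order_less_le_trans)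
    \<comment> \<open>Rescale \<open>u\<close> and \<open>m\<close> to the common total mass \<open>U * M\<close>.\<close>
    define a where "a t = u t * M" for t
    define b where "b t = m t * U" for t
    have sums_eq: "sum a UNIV = sum b UNIV"
      unfolding a_def b_def U_def M_def sum_distrib_right[symmetric] by simp
    have term_eq: "a t * ln (a t / b t) = M * (u t * ln (u t / U) - u t * ln (m t / M))" for t
    proof (cases "u t = 0")
      case False
      then have "0 < u t" "0 < m t" using u_nonneg support m_nonneg less_le by metis+
      then show ?thesis using \<open>0 < U\<close> \<open>0 < M\<close>
        by (simp add: a_def b_def ln_div ln_mult algebra_simps)
    qed (simp add: a_def)
    have sum_eq: "(\<Sum>t\<in>UNIV. a t * ln (a t / b t))
        = M * (neg_entropy u - (\<Sum>t\<in>UNIV. u t * ln (m t / sum m UNIV)))"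
      unfolding term_eq neg_entropy_def sum_distrib_left[symmetric] sum_subtractf U_def M_def ..
    have ab: "0 \<le> a t" "0 \<le> b t" "b t = 0 \<Longrightarrow> a t = 0" for t
      using u_nonneg m_nonneg support \<open>0 < U\<close> \<open>0 < M\<close> by (auto simp: a_def b_def)
    have "0 \<le> (\<Sum>t\<in>UNIV. a t * ln (a t / b t))"
      using sum_mult_ln_div_ge(1)[of UNIV a b] ab sums_eq by simp
    moreover have "\<exists>c. \<forall>t. u t = c * m t" if "(\<Sum>t\<in>UNIV. a t * ln (a t / b t)) = 0"
    proof -
      have "a t = b t" for t
        using sum_mult_ln_div_ge(2)[of UNIV a b] ab sums_eq that by simp
      then have "u t = (U / M) * m t" for t
        using \<open>0 < M\<close> by (simp add: a_def b_def field_simps)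
      then show ?thesis by blast
    qed
    ultimately show ?thesis
      using sum_eq \<open>0 < M\<close> by (simp add: zero_le_mult_iff)
  qed
  then show "(\<Sum>t\<in>UNIV. u t * ln (m t / sum m UNIV)) \<le> neg_entropy u"
    and "neg_entropy u = (\<Sum>t\<in>UNIV. u t * ln (m t / sum m UNIV)) \<Longrightarrow> \<exists>c. \<forall>t. u t = c * m t"
    by blast+
qed

lemma neg_entropy_midpoint:
  fixes u w :: "'t::finite \<Rightarrow> real"
  assumes u_nonneg: "\<And>t. 0 \<le> u t" and w_nonneg: "\<And>t. 0 \<le> w t"
  shows "2 * neg_entropy (\<lambda>t. (u t + w t) / 2) \<le> neg_entropy u + neg_entropy w"
    and "2 * neg_entropy (\<lambda>t. (u t + w t) / 2) = neg_entropy u + neg_entropy w \<Longrightarrow>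
      neg_entropy (\<lambda>t. u t + s * (w t - u t)) = (1 - s) * neg_entropy u + s * neg_entropy w"
proof -
  define m where "m t = (u t + w t) / 2" for t
  have m_eq: "(\<lambda>t. (u t + w t) / 2) = m" by (simp add: m_def fun_eq_iff)
  have m_nonneg: "0 \<le> m t" for t using u_nonneg[of t] w_nonneg[of t] by (simp add: m_def)
  have "u t = 0" "w t = 0" if "m t = 0" for t
    using u_nonneg[of t] w_nonneg[of t] that by (simp_all add: m_def)
  note gibbs_u = gibbs_inequality[of u m, OF u_nonneg m_nonneg \<open>\<And>t. m t = 0 \<Longrightarrow> u t = 0\<close>]
   and gibbs_w = gibbs_inequality[of w m, OF w_nonneg m_nonneg \<open>\<And>t. m t = 0 \<Longrightarrow> w t = 0\<close>]
  have cross: "(\<Sum>t\<in>UNIV. u t * ln (m t / sum m UNIV)) + (\<Sum>t\<in>UNIV. w t * ln (m t / sum m UNIV))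
      = 2 * neg_entropy m"
    unfolding neg_entropy_def sum.distrib[symmetric] sum_distrib_left
    by (intro sum.cong) (auto simp: m_def algebra_simps)
  show "2 * neg_entropy (\<lambda>t. (u t + w t) / 2) \<le> neg_entropy u + neg_entropy w"
    using gibbs_u(1) gibbs_w(1) cross unfolding m_eq by linarith
  assume "2 * neg_entropy (\<lambda>t. (u t + w t) / 2) = neg_entropy u + neg_entropy w"
  then have "neg_entropy u = (\<Sum>t\<in>UNIV. u t * ln (m t / sum m UNIV))"
    and "neg_entropy w = (\<Sum>t\<in>UNIV. w t * ln (m t / sum m UNIV))"
    using gibbs_u(1) gibbs_w(1) cross unfolding m_eq by linarith+
  then have "\<exists>c. \<forall>t. u t = c * m t" and "\<exists>c. \<forall>t. w t = c * m t"
    using gibbs_u(2) gibbs_w(2) by blast+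
  then obtain a b where "u = (\<lambda>t. a * m t)" "w = (\<lambda>t. b * m t)" by blast
  moreover have "(\<lambda>t. a * m t + s * (b * m t - a * m t)) = (\<lambda>t. ((1 - s) * a + s * b) * m t)"
    by (simp add: algebra_simps)
  ultimately show "neg_entropy (\<lambda>t. u t + s * (w t - u t)) = (1 - s) * neg_entropy u + s * neg_entropy w"
    by (simp only: neg_entropy_scale) (simp add: algebra_simps)
qed

definition fibre :: "real ^ ('t::finite \<times> 'x::finite \<times> 'y::finite) \<Rightarrow> 'x \<Rightarrow> 'y \<Rightarrow> 't \<Rightarrow> real" where
  "fibre Q x y = (\<lambda>t. Q $ (t, x, y))"

definition neg_cond_entropy :: "real ^ ('t::finite \<times> 'x::finite \<times> 'y::finite) \<Rightarrow> real" where
  "neg_cond_entropy Q = (\<Sum>x\<in>UNIV. \<Sum>y\<in>UNIV. neg_entropy (fibre Q x y))"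

definition cond_entropy_TY :: "real ^ ('t::finite \<times> 'x::finite \<times> 'y::finite) \<Rightarrow> real" where
  "cond_entropy_TY Q = (\<Sum>t\<in>UNIV. \<Sum>y\<in>UNIV. marg_TY Q t y * ln (marg_Y Q y / marg_TY Q t y))"

lemma cond_mutual_info_summand:
  fixes Q :: "real ^ ('t::finite \<times> 'x::finite \<times> 'y::finite)"
  assumes nonneg: "\<And>i. 0 \<le> Q $ i"
  shows "(if 0 < Q $ (t, x, y)
      then Q $ (t, x, y) * ln ((Q $ (t, x, y) * marg_Y Q y) / (marg_XY Q x y * marg_TY Q t y))
      else 0)
    = Q $ (t, x, y) * ln (Q $ (t, x, y) / marg_XY Q x y)
      + Q $ (t, x, y) * ln (marg_Y Q y / marg_TY Q t y)"
proof (cases "0 < Q $ (t, x, y)")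
  case False
  then show ?thesis using nonneg[of "(t, x, y)"] by simp
next
  case True
  have "Q $ (t, x, y) \<le> marg_XY Q x y"
    unfolding marg_XY_def using nonneg by (intro member_le_sum) auto
  moreover have "Q $ (t, x, y) \<le> marg_TY Q t y"
    unfolding marg_TY_def using nonneg by (intro member_le_sum) auto
  moreover have "marg_TY Q t y \<le> marg_Y Q y"
    unfolding marg_Y_def marg_TY_def[symmetric]
    using nonneg by (intro member_le_sum) (auto simp: marg_TY_def sum_nonneg)
  ultimately show ?thesis
    using True by (simp add: ln_div ln_mult algebra_simps)
qed

lemma cond_mutual_info_eq:
  fixes Q :: "real ^ ('t::finite \<times> 'x::finite \<times> 'y::finite)"
  assumes "\<And>i. 0 \<le> Q $ i"
  shows "cond_mutual_info Q = cond_entropy_TY Q + neg_cond_entropy Q"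
proof -
  have "cond_mutual_info Q = (\<Sum>t\<in>UNIV. \<Sum>x\<in>UNIV. \<Sum>y\<in>UNIV.
      Q $ (t, x, y) * ln (Q $ (t, x, y) / marg_XY Q x y)
      + Q $ (t, x, y) * ln (marg_Y Q y / marg_TY Q t y))"
    unfolding cond_mutual_info_def cond_mutual_info_summand[OF assms]
    by (simp add: sum.cartesian_product[symmetric] UNIV_Times_UNIV[symmetric] del: UNIV_Times_UNIV)
  also have "\<dots> = (\<Sum>t\<in>UNIV. \<Sum>x\<in>UNIV. \<Sum>y\<in>UNIV. Q $ (t, x, y) * ln (Q $ (t, x, y) / marg_XY Q x y))
      + (\<Sum>t\<in>UNIV. \<Sum>x\<in>UNIV. \<Sum>y\<in>UNIV. Q $ (t, x, y) * ln (marg_Y Q y / marg_TY Q t y))"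
    by (simp only: sum.distrib)
  also have "\<dots> = (\<Sum>x\<in>UNIV. \<Sum>y\<in>UNIV. \<Sum>t\<in>UNIV. Q $ (t, x, y) * ln (Q $ (t, x, y) / marg_XY Q x y))
      + (\<Sum>t\<in>UNIV. \<Sum>y\<in>UNIV. \<Sum>x\<in>UNIV. Q $ (t, x, y) * ln (marg_Y Q y / marg_TY Q t y))"
    by (subst (1 2) sum.swap, subst (2) sum.swap) (rule refl)
  also have "\<dots> = neg_cond_entropy Q + cond_entropy_TY Q"
    unfolding neg_cond_entropy_def neg_entropy_def fibre_def cond_entropy_TY_def
      marg_XY_def marg_TY_def[of Q] sum_distrib_right ..
  finally show ?thesis by simp
qed

lemma fibre_midpoint: "fibre (midpoint Q1 Q2) x y = (\<lambda>t. (fibre Q1 x y t + fibre Q2 x y t) / 2)"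
  by (simp add: fibre_def midpoint_def field_simps)

lemma fibre_line: "fibre (Q1 + s *\<^sub>R (Q2 - Q1)) x y = (\<lambda>t. fibre Q1 x y t + s * (fibre Q2 x y t - fibre Q1 x y t))"
  by (simp add: fibre_def)

lemma neg_cond_entropy_midpoint:
  fixes Q1 Q2 :: "real ^ ('t::finite \<times> 'x::finite \<times> 'y::finite)"
  assumes nonneg1: "\<And>i. 0 \<le> Q1 $ i" and nonneg2: "\<And>i. 0 \<le> Q2 $ i"
  shows "2 * neg_cond_entropy (midpoint Q1 Q2) \<le> neg_cond_entropy Q1 + neg_cond_entropy Q2"
    and "2 * neg_cond_entropy (midpoint Q1 Q2) = neg_cond_entropy Q1 + neg_cond_entropy Q2 \<Longrightarrow>
      neg_cond_entropy (Q1 + s *\<^sub>R (Q2 - Q1)) = (1 - s) * neg_cond_entropy Q1 + s * neg_cond_entropy Q2"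
proof -
  have fibre_nonneg: "0 \<le> fibre Q1 x y t" "0 \<le> fibre Q2 x y t" for x y t
    using nonneg1 nonneg2 by (simp_all add: fibre_def)
  define gap where "gap x y = neg_entropy (fibre Q1 x y) + neg_entropy (fibre Q2 x y)
    - 2 * neg_entropy (fibre (midpoint Q1 Q2) x y)" for x y
  have gap_nonneg: "0 \<le> gap x y" for x y
    using neg_entropy_midpoint(1)[of "fibre Q1 x y" "fibre Q2 x y"] fibre_nonneg
    by (simp add: gap_def fibre_midpoint)
  have sum_gap: "(\<Sum>x\<in>UNIV. \<Sum>y\<in>UNIV. gap x y)
      = neg_cond_entropy Q1 + neg_cond_entropy Q2 - 2 * neg_cond_entropy (midpoint Q1 Q2)"
    by (simp add: gap_def neg_cond_entropy_def sum.distrib sum_subtractf sum_distrib_left)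
  show "2 * neg_cond_entropy (midpoint Q1 Q2) \<le> neg_cond_entropy Q1 + neg_cond_entropy Q2"
    using sum_gap sum_nonneg[of UNIV "\<lambda>x. \<Sum>y\<in>UNIV. gap x y"] gap_nonneg
    by (simp add: sum_nonneg)
  assume "2 * neg_cond_entropy (midpoint Q1 Q2) = neg_cond_entropy Q1 + neg_cond_entropy Q2"
  then have "(\<Sum>x\<in>UNIV. \<Sum>y\<in>UNIV. gap x y) = 0" using sum_gap by simp
  then have "gap x y = 0" for x y
    using gap_nonneg by (simp add: sum_nonneg sum_nonneg_eq_0_iff)
  then have "neg_entropy (fibre (Q1 + s *\<^sub>R (Q2 - Q1)) x y)
      = (1 - s) * neg_entropy (fibre Q1 x y) + s * neg_entropy (fibre Q2 x y)" for x y
    using neg_entropy_midpoint(2)[of "fibre Q1 x y" "fibre Q2 x y"] fibre_nonneg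
    by (simp add: gap_def fibre_midpoint fibre_line)
  then show "neg_cond_entropy (Q1 + s *\<^sub>R (Q2 - Q1)) = (1 - s) * neg_cond_entropy Q1 + s * neg_cond_entropy Q2"
    by (simp add: neg_cond_entropy_def sum.distrib sum_distrib_left)
qed

lemma Delta_P_nonneg: "Q \<in> Delta_P P \<Longrightarrow> 0 \<le> Q $ i"
  unfolding Delta_P_def joint_dists_def by blast

lemma Delta_P_line:
  assumes "Q1 \<in> Delta_P P" "Q2 \<in> Delta_P P" "\<And>i. 0 \<le> (Q1 + s *\<^sub>R (Q2 - Q1)) $ i"
  shows "Q1 + s *\<^sub>R (Q2 - Q1) \<in> Delta_P P"
  using assms unfolding Delta_P_def joint_dists_def marg_TX_def marg_TY_def
  by (simp add: sum.distrib sum_distrib_left[symmetric] sum_subtractf)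

lemma cond_mutual_info_on_Delta_P:
  assumes "Q \<in> Delta_P P"
  shows "cond_mutual_info Q = cond_entropy_TY P + neg_cond_entropy Q"
proof -
  have "marg_TY Q t y = marg_TY P t y" for t y using assms by (simp add: Delta_P_def)
  moreover from this have "marg_Y Q y = marg_Y P y" for y
    by (simp add: marg_Y_def marg_TY_def[symmetric])
  ultimately have "cond_entropy_TY Q = cond_entropy_TY P" by (simp add: cond_entropy_TY_def)
  then show ?thesis using cond_mutual_info_eq[of Q] Delta_P_nonneg[OF assms] by simp
qed

text \<open>Two minimizers give equality in midpoint convexity, which makes the objective affine, hence
  constant, on the whole line through them.\<close>
lemma CMI_minimizers_line:
  assumes min1: "Q1 \<in> CMI_minimizers P" and min2: "Q2 \<in> CMI_minimizers P"
    and nonneg: "\<And>i. 0 \<le> (Q1 + s *\<^sub>R (Q2 - Q1)) $ i"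
  shows "Q1 + s *\<^sub>R (Q2 - Q1) \<in> CMI_minimizers P"
proof -
  have in1: "Q1 \<in> Delta_P P" and in2: "Q2 \<in> Delta_P P"
    using min1 min2 by (simp_all add: CMI_minimizers_def)
  have "midpoint Q1 Q2 = Q1 + (1/2) *\<^sub>R (Q2 - Q1)"
    by (simp add: midpoint_def vec_eq_iff field_simps)
  moreover have "0 \<le> (Q1 + (1/2) *\<^sub>R (Q2 - Q1)) $ i" for i
    using Delta_P_nonneg[OF in1, of i] Delta_P_nonneg[OF in2, of i] by (simp add: field_simps)
  ultimately have "midpoint Q1 Q2 \<in> Delta_P P"
    using Delta_P_line[OF in1 in2] by simp
  then have "neg_cond_entropy Q1 \<le> neg_cond_entropy (midpoint Q1 Q2)"
    and "neg_cond_entropy Q1 = neg_cond_entropy Q2"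
    using min1 min2 in1 in2 by (auto simp: CMI_minimizers_def cond_mutual_info_on_Delta_P
      intro: order.antisym)
  then have "neg_cond_entropy (Q1 + s *\<^sub>R (Q2 - Q1)) = neg_cond_entropy Q1"
    using neg_cond_entropy_midpoint(1)[OF Delta_P_nonneg[OF in1] Delta_P_nonneg[OF in2]]
      neg_cond_entropy_midpoint(2)[OF Delta_P_nonneg[OF in1] Delta_P_nonneg[OF in2], of s]
    by (simp add: algebra_simps)
  moreover have "Q1 + s *\<^sub>R (Q2 - Q1) \<in> Delta_P P" using Delta_P_line[OF in1 in2 nonneg] .
  ultimately show ?thesis
    using min1 in1 by (auto simp: CMI_minimizers_def cond_mutual_info_on_Delta_P)
qed

lemma exists_neg_component:
  fixes D :: "real ^ 'n"
  assumes "(\<Sum>i\<in>UNIV. D $ i) = 0" and "D \<noteq> 0"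
  obtains i where "D $ i < 0"
proof (rule ccontr)
  assume "\<not> thesis"
  with that have "0 \<le> D $ i" for i by (meson not_le)
  then have "D $ i = 0" for i using assms(1) sum_nonneg_eq_0_iff[of UNIV "\<lambda>i. D $ i"] by simp
  then show False using assms(2) by (simp add: vec_eq_iff)
qed

lemma ray_exit_point:
  fixes Q D :: "real ^ 'n"
  assumes nonneg: "\<And>i. 0 \<le> Q $ i" and "D $ j < 0"
  obtains s i where "\<And>k. 0 \<le> (Q + s *\<^sub>R D) $ k" "(Q + s *\<^sub>R D) $ i = 0" "D $ i < 0"
proof -
  define I where "I = {i. D $ i < 0}"
  define s where "s = Min ((\<lambda>i. - Q $ i / D $ i) ` I)"
  have "I \<noteq> {}" using assms(2) by (auto simp: I_def)
  then have "s \<in> (\<lambda>i. - Q $ i / D $ i) ` I" unfolding s_def by (intro Min_in) auto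
  then obtain i where i: "i \<in> I" "s = - Q $ i / D $ i" by blast
  have s_le: "s \<le> - Q $ k / D $ k" if "k \<in> I" for k
    unfolding s_def using that by (intro Min_le) auto
  have "0 \<le> s" using i nonneg[of i] by (auto simp: I_def divide_nonneg_neg)
  have "0 \<le> (Q + s *\<^sub>R D) $ k" for k
  proof (cases "k \<in> I")
    case True
    then have "D $ k < 0" by (simp add: I_def)
    then have "(- Q $ k / D $ k) * D $ k \<le> s * D $ k"
      using mult_right_mono_neg[OF s_le[OF True], of "D $ k"] by simp
    then show ?thesis using \<open>D $ k < 0\<close> by (simp add: field_simps)
  next
    case False
    then show ?thesis using nonneg[of k] \<open>0 \<le> s\<close> by (simp add: I_def not_less)
  qed
  moreover have "(Q + s *\<^sub>R D) $ i = 0" "D $ i < 0" using i by (simp_all add: I_def)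
  ultimately show thesis using that by blast
qed

lemma not_in_rel_interior_if_coordinate_vanishes:
  fixes S :: "(real ^ 'n) set"
  assumes nonneg: "\<And>Q' i. Q' \<in> S \<Longrightarrow> 0 \<le> Q' $ i"
    and line: "\<And>t. Q + t *\<^sub>R D \<in> affine hull S"
    and "Q $ i = 0" and "D $ i < 0"
  shows "Q \<notin> rel_interior S"
proof
  assume "Q \<in> rel_interior S"
  then obtain e where "0 < e" and ball: "cball Q e \<inter> affine hull S \<subseteq> S"
    by (auto simp: mem_rel_interior_cball)
  have "0 < norm D" using \<open>D $ i < 0\<close> by (auto simp: vec_eq_iff intro!: exI[of _ i])
  define Q' where "Q' = Q + (e / norm D) *\<^sub>R D"
  have "dist Q Q' = e" using \<open>0 < e\<close> \<open>0 < norm D\<close> by (simp add: Q'_def dist_norm)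
  then have "Q' \<in> S" using ball line[of "e / norm D"] by (auto simp: Q'_def)
  moreover have "Q' $ i < 0"
    using \<open>Q $ i = 0\<close> \<open>D $ i < 0\<close> \<open>0 < e\<close> \<open>0 < norm D\<close> by (simp add: Q'_def mult_pos_neg divide_neg_pos)
  ultimately show False using nonneg not_le by blast
qed

theorem mainTheorem4:
  fixes P :: "real ^ ('t::finite \<times> 'x::finite \<times> 'y::finite)"
  assumes "P \<in> joint_dists"
    and "\<exists>Q1 Q2. Q1 \<in> CMI_minimizers P \<and> Q2 \<in> CMI_minimizers P \<and> Q1 \<noteq> Q2"
  shows "\<exists>Q \<in> CMI_minimizers P. Q \<in> rel_frontier (Delta_P P)"
proof -
  obtain Q1 Q2 where min1: "Q1 \<in> CMI_minimizers P" and min2: "Q2 \<in> CMI_minimizers P"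
    and "Q1 \<noteq> Q2"
    using assms(2) by blast
  have in1: "Q1 \<in> Delta_P P" and in2: "Q2 \<in> Delta_P P"
    using min1 min2 by (simp_all add: CMI_minimizers_def)
  have "(\<Sum>i\<in>UNIV. (Q2 - Q1) $ i) = 0"
    using in1 in2 by (simp add: sum_subtractf Delta_P_def joint_dists_def)
  moreover have "Q2 - Q1 \<noteq> 0" using \<open>Q1 \<noteq> Q2\<close> by simp
  ultimately obtain j where "(Q2 - Q1) $ j < 0" by (rule exists_neg_component)
  then obtain s i where nonneg: "\<And>k. 0 \<le> (Q1 + s *\<^sub>R (Q2 - Q1)) $ k"
    and vanish: "(Q1 + s *\<^sub>R (Q2 - Q1)) $ i = 0" and decr: "(Q2 - Q1) $ i < 0"
    using ray_exit_point[OF Delta_P_nonneg[OF in1]] by blast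
  define Q where "Q = Q1 + s *\<^sub>R (Q2 - Q1)"
  have "Q + t *\<^sub>R (Q2 - Q1) \<in> affine hull (Delta_P P)" for t
  proof -
    have "Q + t *\<^sub>R (Q2 - Q1) = (1 - (s + t)) *\<^sub>R Q1 + (s + t) *\<^sub>R Q2"
      by (simp add: Q_def algebra_simps)
    then show ?thesis
      using mem_affine[OF affine_affine_hull hull_inc[OF in1] hull_inc[OF in2]] by simp
  qed
  then have "Q \<notin> rel_interior (Delta_P P)"
    using vanish decr unfolding Q_def by (intro not_in_rel_interior_if_coordinate_vanishes[OF Delta_P_nonneg])
  moreover have "Q \<in> Delta_P P" using Delta_P_line[OF in1 in2 nonneg] by (simp add: Q_def)
  ultimately show ?thesis
    using CMI_minimizers_line[OF min1 min2 nonneg] closure_subset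
    unfolding rel_frontier_def Q_def by blast
qed

end
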